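(* Let $E$ be a real affine space of dimension $n$ with a system of coordinates $(\ell_1,\dots,\ell_n)$, let $\alpha\in\mathbb R$ and $F=\{z\in E: z_1=\alpha\}$. (i) Let $k\in\{1,\dots,n\}$, let $A\subset F$ belong to the $\sigma$-algebra of subsets of $F$ generated by the restrictions to $F$ of $\ell_2,\dots,\ell_k$, and let $v,w\in\vec E$ satisfy $v_1=w_1=1$ and $(v_2,\dots,v_k)=(w_2,\dots,w_k)$. Then $A_v=A_w$. (ii) Let $\ell$ be an affine form on $E$ which is non-constant on $F$, let $A=F\cap\{\ell\ge 0\}$, and let $v,w\in\vec E$ satisfy $v_1=w_1=1$ and $\vec\ell(v)>\vec\ell(w)$. Then $A_v\subsetneq A_w$. (iii) With $\ell$ and $A=F\cap\{\ell\ge0\}$ as in (ii), let $(v^p)$ be a sequence in $\vec E$ with $v^p_1=1$ for all $p$ and $\vec\ell(v^p)\uparrow+\infty$. Then for every $\mu\in\mathcal M(E)$, $\lim_{p\to\infty}\mu(A_{v^p})=0$.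
   Context: $\vec E$ is the vector space associated with $E$; for an affine form $\ell$ on $E$, $\vec\ell$ is its associated linear form. A system of coordinates is a family $(\ell_1,\dots,\ell_n)$ of affine forms on $E$ such that $x\mapsto(\ell_1(x),\dots,\ell_n(x))$ is a bijection $E\to\mathbb R^n$; for $x\in E$ and $v\in\vec E$ one writes $x_i=\ell_i(x)$ and $v_i=\vec\ell_i(v)$. For $u\in\vec E$ with $u_1\neq 0$ and $A\subset F$, $A_u=\{x\in E: x_1\ge\alpha \text{ and } x-(x_1-\alpha)\frac{u}{u_1}\in A\}$ (the preimage of $A$ under the projection $F+\mathbb R_+u\to F$ along $u$, when $u_1>0$). $\mathcal M(E)$ is the set of finite non-negative Borel measures $\mu$ on $E$ such that $\mu(H)=0$ for every affine hyperplane $H$ of $E$. *)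

theory Defs
  imports "HOL-Analysis.Analysis" "HOL-Probability.Probability"
begin

text \<open>The real affine space E of dimension n is modelled by a Euclidean space 'e
(n = DIM('e)), with its canonical affine structure.\<close>

definition affine_form :: "('e::euclidean_space \<Rightarrow> real) \<Rightarrow> bool" where
  "affine_form l \<longleftrightarrow> (\<exists>f c. linear f \<and> l = (\<lambda>x. f x + c))"

definition lin_part :: "('e::euclidean_space \<Rightarrow> real) \<Rightarrow> 'e \<Rightarrow> real" where
  "lin_part l v = l v - l 0"

definition coord_system :: "(nat \<Rightarrow> 'e::euclidean_space \<Rightarrow> real) \<Rightarrow> bool" where
  "coord_system l \<longleftrightarrow> (\<forall>i\<in>{1..DIM('e)}. affine_form (l i)) \<and>
     bij_betw (\<lambda>x. \<lambda>i\<in>{1..DIM('e)}. l i x) UNIV ({1..DIM('e)} \<rightarrow>\<^sub>E (UNIV::real set))"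

definition cyl :: "('e::euclidean_space \<Rightarrow> real) \<Rightarrow> real \<Rightarrow> 'e set \<Rightarrow> 'e \<Rightarrow> 'e set" where
  "cyl l1 \<alpha> A u = {x. l1 x \<ge> \<alpha> \<and> x - ((l1 x - \<alpha>) / lin_part l1 u) *\<^sub>R u \<in> A}"

text \<open>The class M(E): finite Borel measures vanishing on affine hyperplanes
(hyperplanes = zero sets of non-constant affine forms).\<close>
definition meas_class :: "'e::euclidean_space measure set" where
  "meas_class = {\<mu>. sets \<mu> = sets borel \<and> finite_measure \<mu> \<and>
     (\<forall>l. affine_form l \<and> (\<exists>x y. l x \<noteq> l y) \<longrightarrow> emeasure \<mu> {x. l x = 0} = 0)}"

end

theory Submission
  imports Defs
begin

text \<open>Write \<open>x\<^sub>1 = L 1 x\<close>. For \<open>u\<^sub>1 = 1\<close>, the point \<open>x - (x\<^sub>1 - \<alpha>) u\<close> is the projection of \<open>x\<close>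
  to \<open>F\<close> along \<open>u\<close>; its coordinates are \<open>x\<^sub>i - (x\<^sub>1 - \<alpha>) u\<^sub>i\<close>. Hence (i): sets in the
  \<open>\<sigma>\<close>-algebra generated by \<open>\<ell>\<^sub>2, \<dots>, \<ell>\<^sub>k\<close> cannot distinguish the projections along
  \<open>v\<close> and \<open>w\<close>. For a half-space \<open>A = F \<inter> {\<ell> \<ge> 0}\<close> the cylinder \<open>A\<^sub>u\<close> is the wedge
  \<open>{x\<^sub>1 \<ge> \<alpha>, (x\<^sub>1 - \<alpha>) \<ell>(u) \<le> \<ell>(x)}\<close>, which shrinks as \<open>\<ell>(u)\<close> grows: this gives (ii),
  and in (iii) the wedges decrease to a subset of the hyperplane \<open>F\<close>, which is \<open>\<mu>\<close>-null.\<close>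

lemma affine_form_diff_scaleR:
  assumes "affine_form l"
  shows "l (x - s *\<^sub>R u) = l x - s * lin_part l u"
proof -
  obtain f c where "linear f" "l = (\<lambda>x. f x + c)"
    using assms unfolding affine_form_def by blast
  then show ?thesis by (simp add: lin_part_def linear_diff linear_cmul linear_0)
qed

lemma lin_part_diff:
  assumes "affine_form l"
  shows "lin_part l (a - b) = l a - l b"
  using affine_form_diff_scaleR[OF assms, of a 1 "a - b"] by simp

lemma affine_form_minus_const:
  assumes "affine_form l"
  shows "affine_form (\<lambda>x. l x - c)"
  using assms unfolding affine_form_def by (metis add_diff_eq)

lemma continuous_on_affine_form:
  assumes "affine_form l"
  shows "continuous_on S l"
proof -
  obtain f c where f: "linear f" "l = (\<lambda>x. f x + c)"
    using assms unfolding affine_form_def by blast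
  then have "continuous_on S f" by (simp add: linear_continuous_on linear_conv_bounded_linear)
  then show ?thesis using f(2) by (auto intro!: continuous_intros)
qed

lemma affine_form_zero_on_level_set:
  assumes "affine_form l" "affine_form g" "g x = \<alpha>" "g y = \<alpha>" "l x \<noteq> l y"
  obtains z where "g z = \<alpha>" "l z = 0"
proof
  define s where "s = l x / (l x - l y)"
  define z where "z = x - s *\<^sub>R (x - y)"
  have "l z = l x - s * (l x - l y)"
    unfolding z_def using assms(1) by (simp add: affine_form_diff_scaleR lin_part_diff)
  then show "l z = 0" using assms(5) unfolding s_def by simp
  show "g z = \<alpha>"
    unfolding z_def using assms(2-4) by (simp add: affine_form_diff_scaleR lin_part_diff)
qed

lemma meas_class_level_set_null:
  assumes "\<mu> \<in> meas_class" "affine_form g" "g x \<noteq> g y"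
  shows "{x. g x = c} \<in> null_sets \<mu>"
proof -
  have "affine_form (\<lambda>x. g x - c)" by (rule affine_form_minus_const[OF assms(2)])
  moreover have "\<exists>x y. g x - c \<noteq> g y - c" using assms(3) by auto
  ultimately have "emeasure \<mu> {x. g x - c = 0} = 0"
    using assms(1) unfolding meas_class_def by blast
  moreover have "closed {x. g x = c}"
    by (intro closed_Collect_eq continuous_on_const continuous_on_affine_form assms(2))
  ultimately show ?thesis
    using assms(1) unfolding meas_class_def by (intro null_setsI) auto
qed

lemma sigma_sets_mem_iff:
  assumes "A \<in> sigma_sets \<Omega> G" "y \<in> \<Omega>" "y' \<in> \<Omega>" "\<And>a. a \<in> G \<Longrightarrow> y \<in> a \<longleftrightarrow> y' \<in> a"
  shows "y \<in> A \<longleftrightarrow> y' \<in> A"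
  using assms(1) by induction (use assms(2-4) in auto)

lemma cyl_eq_if_generating_coords_agree:
  assumes F: "F = {z. L1 z = \<alpha>}" and "affine_form L1" "\<forall>i\<in>I. affine_form (L i)"
    and A: "A \<in> sigma_sets F {F \<inter> (L i -` B) | i B. i \<in> I \<and> B \<in> sets borel}"
    and "lin_part L1 v = 1" "lin_part L1 w = 1" "\<forall>i\<in>I. lin_part (L i) v = lin_part (L i) w"
  shows "cyl L1 \<alpha> A v = cyl L1 \<alpha> A w"
proof (rule set_eqI)
  fix x
  let ?t = "L1 x - \<alpha>"
  have "x - ?t *\<^sub>R v \<in> F" "x - ?t *\<^sub>R w \<in> F"
    using assms by (simp_all add: affine_form_diff_scaleR)
  moreover have "\<forall>i\<in>I. L i (x - ?t *\<^sub>R v) = L i (x - ?t *\<^sub>R w)"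
    using assms by (simp add: affine_form_diff_scaleR)
  ultimately have "x - ?t *\<^sub>R v \<in> A \<longleftrightarrow> x - ?t *\<^sub>R w \<in> A"
    by (intro sigma_sets_mem_iff[OF A]) auto
  then show "x \<in> cyl L1 \<alpha> A v \<longleftrightarrow> x \<in> cyl L1 \<alpha> A w"
    using assms by (simp add: cyl_def)
qed

lemma cyl_halfspace_eq:
  assumes "F = {z. L1 z = \<alpha>}" "affine_form L1" "affine_form l" "lin_part L1 v = 1"
  shows "cyl L1 \<alpha> (F \<inter> {x. l x \<ge> 0}) v = {x. \<alpha> \<le> L1 x \<and> (L1 x - \<alpha>) * lin_part l v \<le> l x}"
  using assms by (auto simp: cyl_def affine_form_diff_scaleR)

lemma wedge_antimono:
  fixes f g :: "'a \<Rightarrow> real"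
  assumes "c \<le> c'"
  shows "{x. \<alpha> \<le> g x \<and> (g x - \<alpha>) * c' \<le> f x} \<subseteq> {x. \<alpha> \<le> g x \<and> (g x - \<alpha>) * c \<le> f x}"
proof clarify
  fix x assume "\<alpha> \<le> g x" "(g x - \<alpha>) * c' \<le> f x"
  moreover have "(g x - \<alpha>) * c \<le> (g x - \<alpha>) * c'"
    using assms \<open>\<alpha> \<le> g x\<close> by (intro mult_left_mono) auto
  ultimately show "(g x - \<alpha>) * c \<le> f x" by linarith
qed

lemma INT_wedge_subset_level_set:
  fixes f g :: "'a \<Rightarrow> real"
  assumes "filterlim c at_top sequentially"
  shows "(\<Inter>p. {x. \<alpha> \<le> g x \<and> (g x - \<alpha>) * c p \<le> f x}) \<subseteq> {x. g x = \<alpha>}"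
proof (intro subsetI CollectI)
  fix x assume "x \<in> (\<Inter>p. {x. \<alpha> \<le> g x \<and> (g x - \<alpha>) * c p \<le> f x})"
  then have x: "\<forall>p. \<alpha> \<le> g x \<and> (g x - \<alpha>) * c p \<le> f x" by blast
  show "g x = \<alpha>"
  proof (rule ccontr)
    assume "g x \<noteq> \<alpha>"
    with x have pos: "g x - \<alpha> > 0" by force
    obtain p where "c p > f x / (g x - \<alpha>)"
      using assms by (auto simp: filterlim_at_top_dense eventually_sequentially)
    then have "f x < (g x - \<alpha>) * c p" using pos by (simp add: divide_less_eq mult.commute)
    with x show False by (meson not_le)
  qed
qed

lemma cyl_halfspace_psubset:
  assumes F: "F = {z. L1 z = \<alpha>}" and L1: "affine_form L1" and l: "affine_form l"
    and nonconst: "\<exists>x\<in>F. \<exists>y\<in>F. l x \<noteq> l y"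
    and v: "lin_part L1 v = 1" and w: "lin_part L1 w = 1" and lt: "lin_part l v > lin_part l w"
  shows "cyl L1 \<alpha> (F \<inter> {x. l x \<ge> 0}) v \<subset> cyl L1 \<alpha> (F \<inter> {x. l x \<ge> 0}) w"
proof -
  note eqs = cyl_halfspace_eq[OF F L1 l v] cyl_halfspace_eq[OF F L1 l w]
  obtain y where y: "L1 y = \<alpha>" "l y = 0"
    using nonconst F by (auto elim: affine_form_zero_on_level_set[OF l L1])
  \<comment> \<open>one step from a zero of \<open>\<ell>\<close> on \<open>F\<close> along \<open>w\<close> lies on the boundary of the \<open>w\<close>-wedge\<close>
  define x where "x = y - (-1) *\<^sub>R w"
  have "L1 x = \<alpha> + 1" "l x = lin_part l w"
    unfolding x_def using y w affine_form_diff_scaleR[OF L1, of y "-1" w]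
      affine_form_diff_scaleR[OF l, of y "-1" w] by simp_all
  then have "x \<in> cyl L1 \<alpha> (F \<inter> {x. l x \<ge> 0}) w - cyl L1 \<alpha> (F \<inter> {x. l x \<ge> 0}) v"
    using lt unfolding eqs by auto
  moreover have "cyl L1 \<alpha> (F \<inter> {x. l x \<ge> 0}) v \<subseteq> cyl L1 \<alpha> (F \<inter> {x. l x \<ge> 0}) w"
    unfolding eqs using lt by (intro wedge_antimono) simp
  ultimately show ?thesis by blast
qed

lemma measure_cyl_halfspace_tendsto_0:
  assumes F: "F = {z. L1 z = \<alpha>}" and L1: "affine_form L1" and l: "affine_form l"
    and v: "\<And>p. lin_part L1 (vs p) = 1" and inc: "incseq (\<lambda>p. lin_part l (vs p))"
    and lim: "filterlim (\<lambda>p. lin_part l (vs p)) at_top sequentially"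
    and \<mu>: "\<mu> \<in> meas_class"
  shows "(\<lambda>p. measure \<mu> (cyl L1 \<alpha> (F \<inter> {x. l x \<ge> 0}) (vs p))) \<longlonglongrightarrow> 0"
proof -
  define S where "S p = {x. \<alpha> \<le> L1 x \<and> (L1 x - \<alpha>) * lin_part l (vs p) \<le> l x}" for p
  have "closed (S p)" for p
    unfolding S_def
    by (intro closed_Collect_conj closed_Collect_le continuous_on_const continuous_on_mult
        continuous_on_diff continuous_on_affine_form L1 l)
  then have S_sets: "range S \<subseteq> sets \<mu>" using \<mu> unfolding meas_class_def by auto
  have "decseq S"
  proof (rule antimonoI)
    fix m n :: nat assume "m \<le> n"
    then show "S n \<subseteq> S m"
      unfolding S_def using inc by (intro wedge_antimono) (simp add: incseq_def)
  qed
  have "L1 (vs 0) \<noteq> L1 0" using v[of 0] by (auto simp: lin_part_def)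
  then have "{x. L1 x = \<alpha>} \<in> null_sets \<mu>" by (rule meas_class_level_set_null[OF \<mu> L1])
  moreover have "(\<Inter>p. S p) \<in> sets \<mu>" using S_sets by (intro sets.countable_INT') auto
  moreover have "(\<Inter>p. S p) \<subseteq> {x. L1 x = \<alpha>}"
    unfolding S_def by (rule INT_wedge_subset_level_set[OF lim])
  ultimately have "(\<Inter>p. S p) \<in> null_sets \<mu>" by (rule null_sets_subset)
  then have "measure \<mu> (\<Inter>p. S p) = 0" by (rule measure_eq_0_null_sets)
  moreover have "finite_measure \<mu>" using \<mu> unfolding meas_class_def by simp
  then have "(\<lambda>p. measure \<mu> (S p)) \<longlonglongrightarrow> measure \<mu> (\<Inter>p. S p)"
    using S_sets \<open>decseq S\<close> by (rule finite_measure.finite_Lim_measure_decseq)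
  ultimately show ?thesis
    unfolding S_def using cyl_halfspace_eq[OF F L1 l v] by simp
qed

theorem lemma8:
  fixes L :: "nat \<Rightarrow> 'e::euclidean_space \<Rightarrow> real" and \<alpha> :: real and F :: "'e set"
  assumes coords: "coord_system L"
    and F_def: "F = {z. L 1 z = \<alpha>}"
  shows
    "(\<forall>k\<in>{1..DIM('e)}. \<forall>A v w.
        A \<in> sigma_sets F {F \<inter> (L i -` B) | i B. i \<in> {2..k} \<and> B \<in> sets borel} \<and>
        lin_part (L 1) v = 1 \<and> lin_part (L 1) w = 1 \<and>
        (\<forall>i\<in>{2..k}. lin_part (L i) v = lin_part (L i) w)
        \<longrightarrow> cyl (L 1) \<alpha> A v = cyl (L 1) \<alpha> A w)
   \<and> (\<forall>l v w. affine_form l \<and> (\<exists>x\<in>F. \<exists>y\<in>F. l x \<noteq> l y) \<and>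
        lin_part (L 1) v = 1 \<and> lin_part (L 1) w = 1 \<and> lin_part l v > lin_part l w
        \<longrightarrow> cyl (L 1) \<alpha> (F \<inter> {x. l x \<ge> 0}) v \<subset> cyl (L 1) \<alpha> (F \<inter> {x. l x \<ge> 0}) w)
   \<and> (\<forall>l vs. affine_form l \<and> (\<exists>x\<in>F. \<exists>y\<in>F. l x \<noteq> l y) \<and>
        (\<forall>p. lin_part (L 1) (vs p) = 1) \<and> incseq (\<lambda>p. lin_part l (vs p)) \<and>
        filterlim (\<lambda>p. lin_part l (vs p)) at_top sequentially
        \<longrightarrow> (\<forall>\<mu>\<in>meas_class.
              (\<lambda>p. measure \<mu> (cyl (L 1) \<alpha> (F \<inter> {x. l x \<ge> 0}) (vs p))) \<longlonglongrightarrow> 0))"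
proof -
  have aff: "affine_form (L i)" if "i \<in> {1..DIM('e)}" for i
    using coords that unfolding coord_system_def by auto
  have L1: "affine_form (L 1)" using aff DIM_positive[where 'a='e] by simp
  show ?thesis
  proof (intro conjI ballI allI impI; elim conjE)
    fix k A v w assume "k \<in> {1..DIM('e)}"
    then have "\<forall>i\<in>{2..k}. affine_form (L i)" using aff by auto
    then show "A \<in> sigma_sets F {F \<inter> (L i -` B) | i B. i \<in> {2..k} \<and> B \<in> sets borel} \<Longrightarrow>
        lin_part (L 1) v = 1 \<Longrightarrow> lin_part (L 1) w = 1 \<Longrightarrow>
        \<forall>i\<in>{2..k}. lin_part (L i) v = lin_part (L i) w \<Longrightarrow> cyl (L 1) \<alpha> A v = cyl (L 1) \<alpha> A w"
      by (rule cyl_eq_if_generating_coords_agree[OF F_def L1])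
  next
    fix l v w
    show "affine_form l \<Longrightarrow> \<exists>x\<in>F. \<exists>y\<in>F. l x \<noteq> l y \<Longrightarrow>
        lin_part (L 1) v = 1 \<Longrightarrow> lin_part (L 1) w = 1 \<Longrightarrow> lin_part l w < lin_part l v \<Longrightarrow>
        cyl (L 1) \<alpha> (F \<inter> {x. l x \<ge> 0}) v \<subset> cyl (L 1) \<alpha> (F \<inter> {x. l x \<ge> 0}) w"
      by (rule cyl_halfspace_psubset[OF F_def L1])
  next
    fix l vs \<mu>
    show "\<mu> \<in> meas_class \<Longrightarrow> affine_form l \<Longrightarrow> \<forall>p. lin_part (L 1) (vs p) = 1 \<Longrightarrow>
        incseq (\<lambda>p. lin_part l (vs p)) \<Longrightarrow> filterlim (\<lambda>p. lin_part l (vs p)) at_top sequentially \<Longrightarrow>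
        (\<lambda>p. measure \<mu> (cyl (L 1) \<alpha> (F \<inter> {x. l x \<ge> 0}) (vs p))) \<longlonglongrightarrow> 0"
      by (rule measure_cyl_halfspace_tendsto_0[OF F_def L1]) auto
  qed
qed

end
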